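(* Consider the graded cluster algebra $\mathcal{A}\big((x_1,x_2,x_3),B,(1,1,2)\big)$ with $B=\begin{pmatrix}0&2&-1\\-2&0&1\\1&-1&0\end{pmatrix}$. It has infinitely many distinct cluster variables of degree $1$ and infinitely many distinct cluster variables of degree $-1$.
   Context: Graded cluster algebras: for a $3\times3$ skew-symmetric integer matrix $B=(b_{ij})$ and $k\in\{1,2,3\}$, $\mu_k(B)=(b'_{ij})$ with $b'_{ij}=-b_{ij}$ if $i=k$ or $j=k$ and $b'_{ij}=b_{ij}+\operatorname{sgn}(b_{ik})\max(b_{ik}b_{kj},0)$ otherwise. A seed $((x_1,x_2,x_3),B)$ mutates in direction $k$ to $(x',\mu_k B)$ with $x'_j=x_j$ ($j\ne k$) and $x'_k=\big(\prod_{b_{ik}>0}x_i^{b_{ik}}+\prod_{b_{ik}<0}x_i^{-b_{ik}}\big)/x_k$. Cluster variables are all entries of clusters reachable by iterated mutation; $\mathcal{A}(x,B,g)$ is the algebra they generate, graded by $\deg x_i=g_i$ where $Bg=0$; under mutation at $k$ the degree vector becomes $g'$ with $g'_j=g_j$ ($j\neq k$), $g'_k=-g_k+\sum_{b_{ik}>0}b_{ik}g_i$, and every cluster variable is homogeneous. *)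

theory Defs
  imports Complex_Main "HOL-Library.FuncSet"
begin

text \<open>Indices 1,2,3 of the paper are 0,1,2 here. A cluster variable, being a
  subtraction-free rational function of the initial variables x_1,x_2,x_3, is represented
  by the function it induces on positive real points p (with p 0, p 1, p 2 > 0);
  two rational functions are equal iff they agree on this open set.\<close>

type_synonym point = "nat \<Rightarrow> real"
type_synonym ratfun = "point \<Rightarrow> real"

definition posD :: "point set" where
  "posD = {p. \<forall>i<3. p i > 0}"

definition mat_mut :: "nat \<Rightarrow> (nat \<Rightarrow> nat \<Rightarrow> int) \<Rightarrow> (nat \<Rightarrow> nat \<Rightarrow> int)" where
  "mat_mut k B = (\<lambda>i j. if i = k \<or> j = k then - B i j
                         else B i j + sgn (B i k) * max (B i k * B k j) 0)"

definition var_mut :: "nat \<Rightarrow> (nat \<Rightarrow> nat \<Rightarrow> int) \<Rightarrow> (nat \<Rightarrow> ratfun) \<Rightarrow> (nat \<Rightarrow> ratfun)" where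
  "var_mut k B x = (\<lambda>j. if j = k then
      (\<lambda>p. ((\<Prod>i\<in>{i. i < 3 \<and> B i k > 0}. x i p ^ nat (B i k))
           + (\<Prod>i\<in>{i. i < 3 \<and> B i k < 0}. x i p ^ nat (- B i k))) / x k p)
      else x j)"

definition deg_mut :: "nat \<Rightarrow> (nat \<Rightarrow> nat \<Rightarrow> int) \<Rightarrow> (nat \<Rightarrow> int) \<Rightarrow> (nat \<Rightarrow> int)" where
  "deg_mut k B g = (\<lambda>j. if j = k then - g k + (\<Sum>i\<in>{i. i < 3 \<and> B i k > 0}. B i k * g i)
                        else g j)"

inductive reachable :: "(nat \<Rightarrow> nat \<Rightarrow> int) \<Rightarrow> (nat \<Rightarrow> int)
    \<Rightarrow> (nat \<Rightarrow> ratfun) \<Rightarrow> (nat \<Rightarrow> nat \<Rightarrow> int) \<Rightarrow> (nat \<Rightarrow> int) \<Rightarrow> bool"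
  for B0 g0 where
  init: "reachable B0 g0 (\<lambda>i p. p i) B0 g0"
| step: "reachable B0 g0 x B g \<Longrightarrow> k < 3 \<Longrightarrow>
         reachable B0 g0 (var_mut k B x) (mat_mut k B) (deg_mut k B g)"

definition cluster_vars_deg :: "(nat \<Rightarrow> nat \<Rightarrow> int) \<Rightarrow> (nat \<Rightarrow> int) \<Rightarrow> int \<Rightarrow> ratfun set" where
  "cluster_vars_deg B0 g0 d =
     {restrict (x k) posD | x B g k. reachable B0 g0 x B g \<and> k < 3 \<and> g k = d}"

definition Bex5 :: "nat \<Rightarrow> nat \<Rightarrow> int" where
  "Bex5 i j = (if i < 3 \<and> j < 3 then [[0, 2, -1], [-2, 0, 1], [1, -1, 0]] ! i ! j else 0)"

definition gex5 :: "nat \<Rightarrow> int" where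
  "gex5 i = (if i < 3 then [1, 1, 2] ! i else 0)"

end

theory Submission
  imports Defs
begin

(* Mutating at 0 and then at 1 brings the initial graded seed back to the exchange matrix Bex5 and
  the degree vector (1,1,2), leaving x\<^sub>2 unchanged; likewise, after mutating at 2, 0, 1, mutating at
  0 and then at 2 returns to the exchange matrix reached and its degree vector (-1,-2,-1), leaving
  x\<^sub>1 unchanged. Each such round is a Kronecker-type exchange u' = (c + v\<^sup>2) / u, v' = (c + u'\<^sup>2) / v,
  which at the point (1,1,1) increases v by at least 1 once 1 \<le> u and u + 1 \<le> v. So the variables in
  position 1 along the first cycle (degree 1) and in position 2 along the second (degree -1) take
  unbounded values at (1,1,1); in particular there are infinitely many of them. *)

lemma sum_filter_less_3:
  "(\<Sum>i | i < (3::nat) \<and> P i. f i) =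
     (if P 0 then f 0 else 0) + (if P 1 then f 1 else 0) + (if P 2 then (f 2::'a::comm_monoid_add) else 0)"
proof -
  have "(\<Sum>i | i < 3 \<and> P i. f i) = (\<Sum>i<3. if P i then f i else 0)"
    using sum.inter_filter[of "{..<3::nat}" f P] by (simp add: lessThan_def)
  then show ?thesis by (simp add: numeral_3_eq_3 numeral_2_eq_2 ac_simps)
qed

lemma prod_filter_less_3:
  "(\<Prod>i | i < (3::nat) \<and> P i. f i) =
     (if P 0 then f 0 else 1) * (if P 1 then f 1 else 1) * (if P 2 then (f 2::'a::comm_monoid_mult) else 1)"
proof -
  have "(\<Prod>i | i < 3 \<and> P i. f i) = (\<Prod>i<3. if P i then f i else 1)"
    using prod.inter_filter[of "{..<3::nat}" f P] by (simp add: lessThan_def)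
  then show ?thesis by (simp add: numeral_3_eq_3 numeral_2_eq_2 ac_simps)
qed

lemma var_mut_apply:
  "var_mut k B x j p = (if j = k then
     ((if B 0 k > 0 then x 0 p ^ nat (B 0 k) else 1) * (if B 1 k > 0 then x 1 p ^ nat (B 1 k) else 1)
        * (if B 2 k > 0 then x 2 p ^ nat (B 2 k) else 1)
      + (if B 0 k < 0 then x 0 p ^ nat (- B 0 k) else 1) * (if B 1 k < 0 then x 1 p ^ nat (- B 1 k) else 1)
        * (if B 2 k < 0 then x 2 p ^ nat (- B 2 k) else 1)) / x k p
   else x j p)"
  by (simp add: var_mut_def prod_filter_less_3)

lemma deg_mut_apply:
  "deg_mut k B g j = (if j = k then - g k
     + ((if B 0 k > 0 then B 0 k * g 0 else 0) + (if B 1 k > 0 then B 1 k * g 1 else 0)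
        + (if B 2 k > 0 then B 2 k * g 2 else 0))
   else g j)"
  by (simp add: deg_mut_def sum_filter_less_3)

lemma reachable_mut:
  assumes "reachable B0 g0 x B g" "k < 3" "mat_mut k B = B'" "deg_mut k B g = g'"
  shows "reachable B0 g0 (var_mut k B x) B' g'"
  using reachable.step[OF assms(1,2)] assms(3,4) by simp

lemma exchange_ge_add_one:
  fixes c u v :: real
  assumes "0 \<le> c" "1 \<le> u" "u + 1 \<le> v"
  shows "v + 1 \<le> (c + v\<^sup>2) / u"
proof -
  have "(v + 1) * u \<le> (v + 1) * (v - 1)" using assms by (intro mult_left_mono) auto
  also have "\<dots> \<le> c + v\<^sup>2" using assms by (simp add: power2_eq_square algebra_simps)
  finally show ?thesis using assms by (simp add: field_simps)
qed

lemma exchange_cycle_unbounded: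
  fixes P :: "('i \<Rightarrow> 'p \<Rightarrow> real) \<Rightarrow> bool"
  assumes cycle: "\<And>x. P x \<Longrightarrow> \<exists>z. P z \<and> z c p = x c p \<and>
      z a p = (x c p + (x b p)\<^sup>2) / x a p \<and> z b p = (x c p + (z a p)\<^sup>2) / x b p"
    and start: "P x\<^sub>0" "0 \<le> x\<^sub>0 c p" "1 \<le> x\<^sub>0 a p" "x\<^sub>0 a p + 1 \<le> x\<^sub>0 b p"
  shows "\<exists>x. P x \<and> real n \<le> x b p"
proof -
  have "\<exists>x. P x \<and> 0 \<le> x c p \<and> 1 \<le> x a p \<and> x a p + 1 \<le> x b p \<and> real n \<le> x b p"
  proof (induction n)
    case 0
    show ?case using start by (intro exI[of _ x\<^sub>0]) auto
  next
    case (Suc n)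
    then obtain x where x: "P x" "0 \<le> x c p" "1 \<le> x a p" "x a p + 1 \<le> x b p" "real n \<le> x b p"
      by blast
    obtain z where z: "P z" "z c p = x c p" "z a p = (x c p + (x b p)\<^sup>2) / x a p"
        "z b p = (x c p + (z a p)\<^sup>2) / x b p"
      using cycle[OF x(1)] by blast
    have a: "x b p + 1 \<le> z a p"
      unfolding z(3) using x by (intro exchange_ge_add_one) auto
    have b: "z a p + 1 \<le> z b p"
      unfolding z(4) using x a by (intro exchange_ge_add_one) auto
    show ?case using z(1,2) x a b by (intro exI[of _ z]) auto
  qed
  then show ?thesis by blast
qed

lemma infinite_if_unbounded_at:
  fixes S :: "('a \<Rightarrow> real) set"
  assumes "\<And>n::nat. \<exists>f\<in>S. real n \<le> f p"
  shows "infinite S"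
proof
  assume "finite S"
  then obtain M where M: "\<And>f. f \<in> S \<Longrightarrow> f p \<le> M"
    using finite_imageI[of S "\<lambda>f. f p"] by (metis bdd_above.E bdd_above_finite image_eqI)
  obtain n :: nat where "M < real n" using reals_Archimedean2 by blast
  with assms[of n] M show False by force
qed

lemma infinite_cluster_vars_degI:
  assumes "\<And>n::nat. \<exists>x. reachable B0 g0 x B g \<and> real n \<le> x k p"
    and "k < 3" "g k = d" "p \<in> posD"
  shows "infinite (cluster_vars_deg B0 g0 d)"
proof (rule infinite_if_unbounded_at)
  fix n :: nat
  obtain x where x: "reachable B0 g0 x B g" "real n \<le> x k p" using assms(1) by blast
  have "restrict (x k) posD \<in> cluster_vars_deg B0 g0 d"
    unfolding cluster_vars_deg_def using x(1) assms(2,3) by blast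
  with x(2) assms(4) show "\<exists>f\<in>cluster_vars_deg B0 g0 d. real n \<le> f p" by (metis restrict_apply')
qed

lemma less_3_cases: "(i::nat) < 3 \<longleftrightarrow> i = 0 \<or> i = 1 \<or> i = 2" by auto

definition Bex5_201 :: "nat \<Rightarrow> nat \<Rightarrow> int" where
  "Bex5_201 i j = (if i < 3 \<and> j < 3 then [[0, 1, -2], [-1, 0, 1], [2, -1, 0]] ! i ! j else 0)"

definition gex5_201 :: "nat \<Rightarrow> int" where
  "gex5_201 i = (if i < 3 then [-1, -2, -1] ! i else 0)"

lemma Bex5_cycle_mutations:
  "mat_mut 0 Bex5 = - Bex5" "mat_mut 1 (- Bex5) = Bex5"
  "deg_mut 0 Bex5 gex5 = gex5" "deg_mut 1 (- Bex5) gex5 = gex5"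
  by (auto simp: fun_eq_iff mat_mut_def deg_mut_apply Bex5_def gex5_def less_3_cases)

lemma Bex5_201_cycle_mutations:
  "mat_mut 0 Bex5_201 = - Bex5_201" "mat_mut 2 (- Bex5_201) = Bex5_201"
  "deg_mut 0 Bex5_201 gex5_201 = gex5_201" "deg_mut 2 (- Bex5_201) gex5_201 = gex5_201"
  by (auto simp: fun_eq_iff mat_mut_def deg_mut_apply Bex5_201_def gex5_201_def less_3_cases)

lemma Bex5_mutations_201:
  "mat_mut 1 (mat_mut 0 (mat_mut 2 Bex5)) = Bex5_201"
  "deg_mut 1 (mat_mut 0 (mat_mut 2 Bex5)) (deg_mut 0 (mat_mut 2 Bex5) (deg_mut 2 Bex5 gex5)) = gex5_201"
  by (auto simp: fun_eq_iff mat_mut_def deg_mut_apply Bex5_def gex5_def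
      Bex5_201_def gex5_201_def less_3_cases)

lemma Bex5_cycle:
  assumes "reachable Bex5 gex5 x Bex5 gex5"
  shows "\<exists>z. reachable Bex5 gex5 z Bex5 gex5 \<and> z 2 p = x 2 p \<and>
    z 0 p = (x 2 p + x 1 p ^ 2) / x 0 p \<and> z 1 p = (x 2 p + z 0 p ^ 2) / x 1 p"
proof (intro exI conjI)
  let ?z = "var_mut 1 (- Bex5) (var_mut 0 Bex5 x)"
  show "reachable Bex5 gex5 ?z Bex5 gex5"
    using reachable_mut[OF reachable_mut[OF assms _ Bex5_cycle_mutations(1,3)]
        _ Bex5_cycle_mutations(2,4)] by simp
  show "?z 2 p = x 2 p" "?z 0 p = (x 2 p + x 1 p ^ 2) / x 0 p" "?z 1 p = (x 2 p + ?z 0 p ^ 2) / x 1 p"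
    by (simp_all add: var_mut_apply Bex5_def)
qed

lemma Bex5_201_cycle:
  assumes "reachable Bex5 gex5 x Bex5_201 gex5_201"
  shows "\<exists>z. reachable Bex5 gex5 z Bex5_201 gex5_201 \<and> z 1 p = x 1 p \<and>
    z 0 p = (x 1 p + x 2 p ^ 2) / x 0 p \<and> z 2 p = (x 1 p + z 0 p ^ 2) / x 2 p"
proof (intro exI conjI)
  let ?z = "var_mut 2 (- Bex5_201) (var_mut 0 Bex5_201 x)"
  show "reachable Bex5 gex5 ?z Bex5_201 gex5_201"
    using reachable_mut[OF reachable_mut[OF assms _ Bex5_201_cycle_mutations(1,3)]
        _ Bex5_201_cycle_mutations(2,4)] by simp
  show "?z 1 p = x 1 p" "?z 0 p = (x 1 p + x 2 p ^ 2) / x 0 p" "?z 2 p = (x 1 p + ?z 0 p ^ 2) / x 2 p"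
    by (simp_all add: var_mut_apply Bex5_201_def add.commute)
qed

lemma reachable_Bex5_201:
  "\<exists>x. reachable Bex5 gex5 x Bex5_201 gex5_201 \<and> x 0 (\<lambda>_. 1) = 3 \<and> x 1 (\<lambda>_. 1) = 5 \<and> x 2 (\<lambda>_. 1) = 2"
proof (intro exI conjI)
  let ?x = "var_mut 1 (mat_mut 0 (mat_mut 2 Bex5))
     (var_mut 0 (mat_mut 2 Bex5) (var_mut 2 Bex5 (\<lambda>i p. p i)))"
  show "reachable Bex5 gex5 ?x Bex5_201 gex5_201"
    using reachable_mut[OF reachable_mut[OF reachable_mut[OF reachable.init _ refl refl] _ refl refl]
        _ Bex5_mutations_201] by simp
  show "?x 0 (\<lambda>_. 1) = 3" "?x 1 (\<lambda>_. 1) = 5" "?x 2 (\<lambda>_. 1) = 2"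
    by (simp_all add: var_mut_apply mat_mut_def Bex5_def)
qed

lemma degree_one_cycle_unbounded:
  "\<exists>x. reachable Bex5 gex5 x Bex5 gex5 \<and> real n \<le> x 1 (\<lambda>_. 1)"
proof -
  obtain x where x: "reachable Bex5 gex5 x Bex5 gex5"
    "x 0 (\<lambda>_. 1) = 2" "x 1 (\<lambda>_. 1) = 5" "x 2 (\<lambda>_. 1) = 1"
    using Bex5_cycle[OF reachable.init, of "\<lambda>_. 1"] by auto
  show ?thesis
    by (rule exchange_cycle_unbounded[where P = "\<lambda>x. reachable Bex5 gex5 x Bex5 gex5"
          and a = 0 and b = 1 and c = 2, OF Bex5_cycle x(1)])
      (use x in simp_all)
qed

lemma degree_neg_one_cycle_unbounded:
  "\<exists>x. reachable Bex5 gex5 x Bex5_201 gex5_201 \<and> real n \<le> x 2 (\<lambda>_. 1)"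
proof -
  obtain y where y: "reachable Bex5 gex5 y Bex5_201 gex5_201"
    "y 0 (\<lambda>_. 1) = 3" "y 1 (\<lambda>_. 1) = 5" "y 2 (\<lambda>_. 1) = 2"
    using reachable_Bex5_201 by blast
  obtain x where x: "reachable Bex5 gex5 x Bex5_201 gex5_201"
    "x 0 (\<lambda>_. 1) = 3" "x 1 (\<lambda>_. 1) = 5" "x 2 (\<lambda>_. 1) = 7"
    using Bex5_201_cycle[OF y(1), of "\<lambda>_. 1"] y by auto
  show ?thesis
    by (rule exchange_cycle_unbounded[where P = "\<lambda>x. reachable Bex5 gex5 x Bex5_201 gex5_201"
          and a = 0 and b = 2 and c = 1, OF Bex5_201_cycle x(1)])
      (use x in simp_all)
qed

theorem mainTheorem5:
  shows "infinite (cluster_vars_deg Bex5 gex5 1) \<and> infinite (cluster_vars_deg Bex5 gex5 (-1))"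
proof
  have ones: "(\<lambda>_. 1) \<in> posD" by (simp add: posD_def)
  show "infinite (cluster_vars_deg Bex5 gex5 1)"
    by (rule infinite_cluster_vars_degI[OF degree_one_cycle_unbounded _ _ ones])
      (simp_all add: gex5_def)
  show "infinite (cluster_vars_deg Bex5 gex5 (-1))"
    by (rule infinite_cluster_vars_degI[OF degree_neg_one_cycle_unbounded _ _ ones])
      (simp_all add: gex5_201_def)
qed

end
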